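(* Assume the setting and Assumption (A1) of the context. Let $\mathcal F$ and $\mathcal G$ be pointwise measurable classes of real functions on $\mathcal Y$ with envelopes $F$ and $G$ such that $E[(\sum_{\ell=1}^{N_{\mathbf 1}}F(Y_{\ell,\mathbf 1}))^2]<\infty$ and $E[(\sum_{\ell=1}^{N_{\mathbf 1}}G(Y_{\ell,\mathbf 1}))^2]<\infty$. Write $S^f_{\mathbf j}=\sum_{\ell=1}^{N_{\mathbf j}}f(Y_{\ell,\mathbf j})$. Then for every $i\in\{1,\dots,k\}$, $$E\Big[\sup_{(f,g)\in\mathcal F\times\mathcal G}\Big|\frac1{|\mathcal B_i|}\sum_{(\mathbf j,\mathbf j')\in\mathcal B_i}S^f_{\mathbf j}S^g_{\mathbf j'}-\frac1{|\mathcal A_i|}\sum_{(\mathbf j,\mathbf j')\in\mathcal A_i}S^f_{\mathbf j}S^g_{\mathbf j'}\Big|\Big]=o(1)\quad(\underline C\to\infty),$$ and for every $r\ge1$ and $\mathbf e\in\{0,1\}^k$ with $\sum_ie_i=r$, $$\Pi_C^{-2}\,E\Big[\sup_{(f,g)\in\mathcal F\times\mathcal G}\Big|\sum_{(\mathbf j,\mathbf j')\in\mathcal B_{\mathbf e}}S^f_{\mathbf j}S^g_{\mathbf j'}\Big|\Big]=O(\underline C^{-r}).$$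
   Context: Fix $k,l\ge1$, $\mathcal Y\subset\mathbb R^l$. Cells $\mathbf j\in(\mathbb N^* )^k$ with componentwise order $\le$, $\mathbf 1=(1,\dots,1)$. Data array $(N_{\mathbf j},(Y_{\ell,\mathbf j})_{\ell\ge1})_{\mathbf j\ge\mathbf 1}$, $N_{\mathbf j}\in\mathbb N$, $Y_{\ell,\mathbf j}\in\mathcal Y$. $\mathbf C=(C_1,\dots,C_k)$, $\underline C=\min_iC_i$, $\Pi_C=\prod_iC_i$. Assumption (A1): (i) separate exchangeability: for any permutations $\pi_1,\dots,\pi_k$ of $\mathbb N^*$ the array has the same joint law as the array with cell $\mathbf j$ replaced by cell $(\pi_1(j_1),\dots,\pi_k(j_k))$; (ii) for any $\mathbf c\ge\mathbf 1$, the cells $\mathbf 1\le\mathbf j\le\mathbf c$ are jointly independent of the cells $\mathbf j'\ge\mathbf c+\mathbf 1$; (iii) $E(N_{\mathbf 1})>0$; (iv) asymptotics $\underline C\to\infty$ with $\underline C/C_i\to\lambda_i\ge0$. Sets of pairs (all with $\mathbf 1\le\mathbf j,\mathbf j'\le\mathbf C$): $\mathcal A_i=\{(\mathbf j,\mathbf j'):j_i=j'_i,\ j_s\ne j'_s\ \forall s\ne i\}$; $\mathcal B_i=\{(\mathbf j,\mathbf j'):j_i=j'_i\}$; for $\mathbf e\in\{0,1\}^k$, $\mathcal B_{\mathbf e}=\{(\mathbf j,\mathbf j'):\ e_i=1\Rightarrow j_i=j'_i\ \forall i\}$. Pointwise measurable: a countable subclass whose pointwise limits give all elements; envelope $F\ge\sup|f|$.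 *)

theory Defs
  imports "HOL-Probability.Probability" "HOL-Combinatorics.Permutations"
begin

text \<open>Cells j in (N*)^k are encoded as functions nat => nat with j i >= 1 for i < k
  and j i = 0 for i >= k (coordinates are indexed 0..k-1).\<close>

definition cells :: "nat \<Rightarrow> (nat \<Rightarrow> nat) set" where
  "cells k = {j. (\<forall>i<k. 1 \<le> j i) \<and> (\<forall>i\<ge>k. j i = 0)}"

definition one_cell :: "nat \<Rightarrow> nat \<Rightarrow> nat" where
  "one_cell k = (\<lambda>i. if i < k then 1 else 0)"

definition box :: "nat \<Rightarrow> (nat \<Rightarrow> nat) \<Rightarrow> (nat \<Rightarrow> nat) set" where
  "box k C = {j \<in> cells k. \<forall>i<k. j i \<le> C i}"

definition setA :: "nat \<Rightarrow> (nat \<Rightarrow> nat) \<Rightarrow> nat \<Rightarrow> ((nat \<Rightarrow> nat) \<times> (nat \<Rightarrow> nat)) set" where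
  "setA k C i = {(j, j'). j \<in> box k C \<and> j' \<in> box k C \<and> j i = j' i \<and>
                          (\<forall>s<k. s \<noteq> i \<longrightarrow> j s \<noteq> j' s)}"

definition setB :: "nat \<Rightarrow> (nat \<Rightarrow> nat) \<Rightarrow> nat \<Rightarrow> ((nat \<Rightarrow> nat) \<times> (nat \<Rightarrow> nat)) set" where
  "setB k C i = {(j, j'). j \<in> box k C \<and> j' \<in> box k C \<and> j i = j' i}"

definition setBe :: "nat \<Rightarrow> (nat \<Rightarrow> nat) \<Rightarrow> (nat \<Rightarrow> nat) \<Rightarrow> ((nat \<Rightarrow> nat) \<times> (nat \<Rightarrow> nat)) set" where
  "setBe k C e = {(j, j'). j \<in> box k C \<and> j' \<in> box k C \<and> (\<forall>i<k. e i = 1 \<longrightarrow> j i = j' i)}"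

text \<open>Measurable space of the data of one cell: (N_j, (Y_{l,j})_l).\<close>
definition cell_space :: "(nat \<times> (nat \<Rightarrow> 'b::topological_space)) measure" where
  "cell_space = count_space UNIV \<Otimes>\<^sub>M (\<Pi>\<^sub>M l\<in>UNIV. borel)"

definition array_space :: "nat \<Rightarrow> (nat \<Rightarrow> nat) set \<Rightarrow>
    ((nat \<Rightarrow> nat) \<Rightarrow> (nat \<times> (nat \<Rightarrow> 'b::topological_space))) measure" where
  "array_space k J = (\<Pi>\<^sub>M j\<in>J. cell_space)"

definition data_array :: "('a \<Rightarrow> (nat \<Rightarrow> nat) \<Rightarrow> nat) \<Rightarrow> ('a \<Rightarrow> nat \<Rightarrow> (nat \<Rightarrow> nat) \<Rightarrow> 'b)
    \<Rightarrow> (nat \<Rightarrow> nat) set \<Rightarrow> 'a \<Rightarrow> (nat \<Rightarrow> nat) \<Rightarrow> (nat \<times> (nat \<Rightarrow> 'b))" where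
  "data_array N Y J \<omega> = (\<lambda>j\<in>J. (N \<omega> j, \<lambda>l. Y \<omega> l j))"

definition permute_cell :: "nat \<Rightarrow> (nat \<Rightarrow> nat \<Rightarrow> nat) \<Rightarrow> (nat \<Rightarrow> nat) \<Rightarrow> (nat \<Rightarrow> nat)" where
  "permute_cell k \<pi> j = (\<lambda>i. if i < k then \<pi> i (j i) else 0)"

definition A1 :: "'a measure \<Rightarrow> nat \<Rightarrow> ('a \<Rightarrow> (nat \<Rightarrow> nat) \<Rightarrow> nat)
    \<Rightarrow> ('a \<Rightarrow> nat \<Rightarrow> (nat \<Rightarrow> nat) \<Rightarrow> 'b::topological_space) \<Rightarrow> bool" where
  "A1 M k N Y \<longleftrightarrow>
     \<comment> \<open>(i) separate exchangeability\<close>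
     (\<forall>\<pi>. (\<forall>i<k. \<pi> i permutes {1..}) \<longrightarrow>
        distr M (array_space k (cells k)) (data_array N Y (cells k)) =
        distr M (array_space k (cells k))
          (\<lambda>\<omega>. \<lambda>j\<in>cells k. data_array N Y (cells k) \<omega> (permute_cell k \<pi> j))) \<and>
     \<comment> \<open>(ii) dissociation\<close>
     (\<forall>c\<in>cells k.
        prob_space.indep_var M
          (array_space k {j\<in>cells k. \<forall>i<k. j i \<le> c i})
          (data_array N Y {j\<in>cells k. \<forall>i<k. j i \<le> c i})
          (array_space k {j\<in>cells k. \<forall>i<k. c i + 1 \<le> j i})
          (data_array N Y {j\<in>cells k. \<forall>i<k. c i + 1 \<le> j i})) \<and>
     \<comment> \<open>(iii) E(N_1) > 0\<close>
     (\<integral>\<^sup>+\<omega>. ennreal (real (N \<omega> (one_cell k))) \<partial>M) > 0"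

definition pointwise_measurable :: "'b set \<Rightarrow> ('b \<Rightarrow> real) set \<Rightarrow> bool" where
  "pointwise_measurable Ys F \<longleftrightarrow>
     (\<exists>G\<subseteq>F. countable G \<and>
        (\<forall>f\<in>F. \<exists>s. (\<forall>n. s n \<in> G) \<and> (\<forall>y\<in>Ys. (\<lambda>n. s n y) \<longlonglongrightarrow> f y)))"

definition Ssum :: "('a \<Rightarrow> (nat \<Rightarrow> nat) \<Rightarrow> nat) \<Rightarrow> ('a \<Rightarrow> nat \<Rightarrow> (nat \<Rightarrow> nat) \<Rightarrow> 'b)
    \<Rightarrow> ('b \<Rightarrow> real) \<Rightarrow> 'a \<Rightarrow> (nat \<Rightarrow> nat) \<Rightarrow> real" where
  "Ssum N Y f \<omega> j = (\<Sum>l=1..N \<omega> j. f (Y \<omega> l j))"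

end

theory Submission
  imports Defs
begin

text \<open>By AM-GM, \<open>\<bar>S\<^sup>f\<^sub>j S\<^sup>g\<^sub>k\<bar>\<close> is bounded, uniformly in \<open>(f, g)\<close>, by the weight
  \<open>w(j, k) = ((S\<^sup>F\<^sub>j)\<^sup>2 + (S\<^sup>G\<^sub>k)\<^sup>2) / 2\<close>, and by separate exchangeability the mean
  \<open>d = E w(j, k) < \<infinity>\<close> does not depend on the cells. Hence the expected supremum of
  \<open>\<bar>\<Sum>\<^sub>p c\<^sub>p S\<^sup>f S\<^sup>g\<bar>\<close> is at most \<open>d \<Sum>\<^sub>p \<bar>c\<^sub>p\<bar>\<close>. For the difference of the averages
  over \<open>B\<^sub>i \<supseteq> A\<^sub>i\<close> the coefficients have total mass \<open>2 - 2 |A\<^sub>i| / |B\<^sub>i|\<close>, which tends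
  to 0; for the sum over \<open>B\<^sub>e\<close> it is \<open>|B\<^sub>e| \<le> \<Pi>\<^sub>C\<^sup>2 / (min\<^sub>i C\<^sub>i)\<^sup>r\<close>.\<close>

lemma finite_box: "finite (box k C)"
proof -
  have "box k C \<subseteq> (\<lambda>x s. if s < k then x s else 0) ` PiE {..<k} (\<lambda>s. {1..C s})"
  proof
    fix j assume "j \<in> box k C"
    then show "j \<in> (\<lambda>x s. if s < k then x s else 0) ` PiE {..<k} (\<lambda>s. {1..C s})"
      by (intro image_eqI[where x = "restrict j {..<k}"])
         (auto simp: box_def cells_def fun_eq_iff PiE_def Pi_def)
  qed
  then show ?thesis
    by (rule finite_subset) (auto intro!: finite_PiE)
qed

lemma finite_setB: "finite (setB k C i)"
  unfolding setB_def by (rule finite_subset[of _ "box k C \<times> box k C"]) (auto simp: finite_box)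

lemma finite_setBe: "finite (setBe k C e)"
  unfolding setBe_def by (rule finite_subset[of _ "box k C \<times> box k C"]) (auto simp: finite_box)

lemma setA_subset_setB: "setA k C i \<subseteq> setB k C i"
  unfolding setA_def setB_def by auto

lemma setB_subset_cells: "setB k C i \<subseteq> cells k \<times> cells k"
  unfolding setB_def box_def by auto

lemma setBe_subset_cells: "setBe k C e \<subseteq> cells k \<times> cells k"
  unfolding setBe_def box_def by auto

lemma card_box_pairs:
  "card {(j, j'). j \<in> box k C \<and> j' \<in> box k C \<and> (\<forall>s<k. (j s, j' s) \<in> R s)}
     = (\<Prod>s<k. card (R s \<inter> {1..C s} \<times> {1..C s}))"
proof -
  let ?S = "{(j, j'). j \<in> box k C \<and> j' \<in> box k C \<and> (\<forall>s<k. (j s, j' s) \<in> R s)}"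
  let ?T = "PiE {..<k} (\<lambda>s. R s \<inter> {1..C s} \<times> {1..C s})"
  let ?zip = "\<lambda>(j, j'). \<lambda>s\<in>{..<k}. (j s, j' s)"
  let ?unzip = "\<lambda>x. (\<lambda>s. if s < k then fst (x s) else 0, \<lambda>s. if s < k then snd (x s) else 0)"
  have "bij_betw ?zip ?S ?T"
  proof (rule bij_betw_byWitness[where f' = ?unzip])
    show "\<forall>a\<in>?S. ?unzip (?zip a) = a"
      by (auto simp: box_def cells_def fun_eq_iff)
    show "\<forall>a\<in>?T. ?zip (?unzip a) = a"
      by (auto simp: fun_eq_iff PiE_iff extensional_def)
    show "?zip ` ?S \<subseteq> ?T"
      by (auto simp: box_def cells_def PiE_def Pi_def)
    show "?unzip ` ?T \<subseteq> ?S"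
      by (force simp: box_def cells_def PiE_iff)
  qed
  then show ?thesis
    by (simp add: bij_betw_same_card card_PiE)
qed

lemma card_diagonal_interval: "card ({(a, b). a = b} \<inter> {1..c} \<times> {1..c::nat}) = c"
proof -
  have "{(a, b). a = b} \<inter> {1..c} \<times> {1..c::nat} = (\<lambda>a. (a, a)) ` {1..c}"
    by auto
  then show ?thesis
    by (simp add: card_image inj_on_def)
qed

lemma card_off_diagonal_interval:
  "card ({(a, b). a \<noteq> b} \<inter> {1..c} \<times> {1..c::nat}) = c * c - c"
proof -
  have "{(a, b). a \<noteq> b} \<inter> {1..c} \<times> {1..c::nat}
      = {1..c} \<times> {1..c} - {(a, b). a = b} \<inter> {1..c} \<times> {1..c}"
    by auto
  then show ?thesis
    using card_diagonal_interval[of c] by (simp add: card_Diff_subset card_cartesian_product)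
qed

lemma card_setBe: "card (setBe k C e) = (\<Prod>s<k. if e s = 1 then C s else C s * C s)"
proof -
  have eq: "setBe k C e = {(j, j'). j \<in> box k C \<and> j' \<in> box k C \<and>
      (\<forall>s<k. (j s, j' s) \<in> (if e s = 1 then {(a, b). a = b} else UNIV))}"
    unfolding setBe_def by (auto split: if_splits)
  show ?thesis
    unfolding eq card_box_pairs
    using card_diagonal_interval card_cartesian_product by (intro prod.cong) auto
qed

lemma card_setB:
  assumes "i < k"
  shows "card (setB k C i) = (\<Prod>s<k. if s = i then C s else C s * C s)"
proof -
  have eq: "setB k C i = {(j, j'). j \<in> box k C \<and> j' \<in> box k C \<and>
      (\<forall>s<k. (j s, j' s) \<in> (if s = i then {(a, b). a = b} else UNIV))}"
    unfolding setB_def using assms by (auto split: if_splits)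
  show ?thesis
    unfolding eq card_box_pairs
    using card_diagonal_interval card_cartesian_product by (intro prod.cong) auto
qed

lemma card_setA:
  assumes "i < k"
  shows "card (setA k C i) = (\<Prod>s<k. if s = i then C s else C s * C s - C s)"
proof -
  have eq: "setA k C i = {(j, j'). j \<in> box k C \<and> j' \<in> box k C \<and>
      (\<forall>s<k. (j s, j' s) \<in> (if s = i then {(a, b). a = b} else {(a, b). a \<noteq> b}))}"
    unfolding setA_def using assms by (auto split: if_splits)
  show ?thesis
    unfolding eq card_box_pairs
    using card_diagonal_interval card_off_diagonal_interval by (intro prod.cong) auto
qed

text \<open>The absolute values of the coefficients of \<open>x p\<close> in
  \<open>(\<Sum>p\<in>B. x p) / card B - (\<Sum>p\<in>A. x p) / card A\<close> for \<open>A \<subseteq> B\<close>.\<close>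

definition avg_diff_weight :: "'p set \<Rightarrow> 'p set \<Rightarrow> 'p \<Rightarrow> real" where
  "avg_diff_weight A B p =
     (if p \<in> A then 1 / real (card A) - 1 / real (card B) else 1 / real (card B))"

lemma avg_diff_weight_nonneg:
  assumes "finite B" and "A \<subseteq> B"
  shows "0 \<le> avg_diff_weight A B p"
proof -
  have "1 / real (card B) \<le> 1 / real (card A)" if "p \<in> A"
  proof -
    have "0 < card A"
      using that assms by (auto simp: card_gt_0_iff dest: finite_subset)
    then show ?thesis
      using card_mono[OF assms] by (simp add: frac_le)
  qed
  then show ?thesis
    by (auto simp: avg_diff_weight_def)
qed

lemma sum_avg_diff_weight:
  assumes B: "finite B" and AB: "A \<subseteq> B" and "A \<noteq> {}"
  shows "(\<Sum>p\<in>B. avg_diff_weight A B p) = 2 - 2 * real (card A) / real (card B)"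
proof -
  define a where "a = real (card A)"
  define b where "b = real (card B)"
  have A: "finite A"
    using B AB finite_subset by blast
  have "0 < a" and "a \<le> b"
    using \<open>A \<noteq> {}\<close> A card_mono[OF B AB] unfolding a_def b_def by auto
  have "(\<Sum>p\<in>B. avg_diff_weight A B p) = (\<Sum>p\<in>B - A. 1 / b) + (\<Sum>p\<in>A. 1 / a - 1 / b)"
    using sum.subset_diff[OF AB B, of "avg_diff_weight A B"]
    by (simp add: avg_diff_weight_def a_def b_def)
  also have "\<dots> = (b - a) / b + a * (1 / a - 1 / b)"
    using card_Diff_subset[OF A AB] card_mono[OF B AB] unfolding a_def b_def
    by (simp add: of_nat_diff)
  also have "\<dots> = 2 - 2 * a / b"
    using \<open>0 < a\<close> \<open>a \<le> b\<close> by (simp add: field_simps)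
  finally show ?thesis
    unfolding a_def b_def .
qed

lemma abs_avg_diff_le:
  fixes x w :: "'p \<Rightarrow> real"
  assumes B: "finite B" and AB: "A \<subseteq> B" and "A \<noteq> {}"
    and x_le_w: "\<And>p. p \<in> B \<Longrightarrow> \<bar>x p\<bar> \<le> w p"
  shows "\<bar>(\<Sum>p\<in>B. x p) / real (card B) - (\<Sum>p\<in>A. x p) / real (card A)\<bar>
         \<le> (\<Sum>p\<in>B. avg_diff_weight A B p * w p)"
proof -
  define a where "a = real (card A)"
  define b where "b = real (card B)"
  define coef where "coef p = 1 / b - (if p \<in> A then 1 / a else 0)" for p
  have A: "finite A"
    using B AB finite_subset by blast
  have "0 < a" and "a \<le> b"
    using \<open>A \<noteq> {}\<close> A card_mono[OF B AB] unfolding a_def b_def by auto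
  have "1 / b \<le> 1 / a"
    using \<open>0 < a\<close> \<open>a \<le> b\<close> by (simp add: frac_le)
  then have abs_coef: "\<bar>coef p\<bar> = avg_diff_weight A B p" for p
    by (auto simp: coef_def avg_diff_weight_def a_def b_def)
  have "(\<Sum>p\<in>B. x p) / b - (\<Sum>p\<in>A. x p) / a
      = (\<Sum>p\<in>B. x p / b) - (\<Sum>p\<in>B. if p \<in> A then x p / a else 0)"
    using sum.inter_restrict[OF B, of "\<lambda>p. x p / a" A] AB
    by (simp add: sum_divide_distrib Int_absorb1)
  also have "\<dots> = (\<Sum>p\<in>B. coef p * x p)"
    unfolding coef_def sum_subtractf[symmetric] by (intro sum.cong) (auto simp: field_simps)
  also have "\<bar>\<dots>\<bar> \<le> (\<Sum>p\<in>B. \<bar>coef p\<bar> * \<bar>x p\<bar>)"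
    by (rule order_trans[OF sum_abs]) (simp add: abs_mult)
  also have "\<dots> \<le> (\<Sum>p\<in>B. avg_diff_weight A B p * w p)"
    unfolding abs_coef by (intro sum_mono mult_left_mono x_le_w avg_diff_weight_nonneg[OF B AB])
  finally show ?thesis
    unfolding a_def b_def .
qed

lemma real_prod_off_diagonal_div_prod_square:
  assumes "\<And>s. s < k \<Longrightarrow> 1 \<le> c s"
  shows "real (\<Prod>s<k. if s = i then c s else c s * c s - c s)
           / real (\<Prod>s<k. if s = i then c s else c s * c s)
       = (\<Prod>s<k. if s = i then 1 else 1 - 1 / real (c s))"
  unfolding of_nat_prod prod_dividef[symmetric]
proof (rule prod.cong[OF refl])
  fix s assume "s \<in> {..<k}"
  then have "1 \<le> c s" and "c s \<le> c s * c s"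
    using assms by auto
  then show "real (if s = i then c s else c s * c s - c s) / real (if s = i then c s else c s * c s)
      = (if s = i then 1 else 1 - 1 / real (c s))"
    by (auto simp: of_nat_diff field_simps)
qed

lemma card_setA_div_card_setB_tendsto_1:
  fixes C :: "nat \<Rightarrow> nat \<Rightarrow> nat"
  assumes C_lim: "filterlim (\<lambda>n. Min ((C n) ` {..<k})) at_top sequentially"
    and C_pos: "\<And>n s. s < k \<Longrightarrow> 1 \<le> C n s" and i: "i < k"
  shows "((\<lambda>n. real (card (setA k (C n) i)) / real (card (setB k (C n) i))) \<longlongrightarrow> 1) sequentially"
proof -
  have C_inverse_lim: "((\<lambda>n. 1 - 1 / real (C n s)) \<longlongrightarrow> 1) sequentially" if "s < k" for s
  proof -
    have "filterlim (\<lambda>n. real (Min ((C n) ` {..<k}))) at_top sequentially"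
      by (rule filterlim_compose[OF filterlim_real_sequentially C_lim])
    then have "filterlim (\<lambda>n. real (C n s)) at_top sequentially"
      by (rule filterlim_at_top_mono) (use \<open>s < k\<close> in simp)
    then have "((\<lambda>n. 1 / real (C n s)) \<longlongrightarrow> 0) sequentially"
      using tendsto_inverse_0_at_top by (simp add: inverse_eq_divide)
    then show ?thesis
      using tendsto_diff[OF tendsto_const, of _ 0 sequentially 1] by simp
  qed
  have "((\<lambda>n. \<Prod>s<k. if s = i then 1 else 1 - 1 / real (C n s))
          \<longlongrightarrow> (\<Prod>s<k. if s = i then 1 else 1 :: real)) sequentially"
  proof (rule tendsto_prod)
    fix s assume "s \<in> {..<k}"
    then show "((\<lambda>n. if s = i then 1 else 1 - 1 / real (C n s)) \<longlongrightarrow> (if s = i then 1 else 1))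
        sequentially"
      by (cases "s = i") (auto intro: C_inverse_lim)
  qed
  moreover have "real (card (setA k (C n) i)) / real (card (setB k (C n) i))
      = (\<Prod>s<k. if s = i then 1 else 1 - 1 / real (C n s))" for n
    unfolding card_setA[OF i] card_setB[OF i] using C_pos
    by (rule real_prod_off_diagonal_div_prod_square)
  ultimately show ?thesis
    by simp
qed

lemma card_setBe_div_square_le:
  fixes C :: "nat \<Rightarrow> nat"
  assumes k: "0 < k" and C_pos: "\<And>s. s < k \<Longrightarrow> 1 \<le> C s"
    and e: "\<forall>s<k. e s \<in> {0, 1}" and r: "(\<Sum>s<k. e s) = r"
  shows "real (card (setBe k C e)) / (real (\<Prod>s<k. C s))\<^sup>2 \<le> real (Min (C ` {..<k})) powr - real r"
proof -
  define m where "m = Min (C ` {..<k})"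
  have m_le: "m \<le> C s" if "s < k" for s
    unfolding m_def using that by simp
  have "m \<in> C ` {..<k}"
    unfolding m_def using k by (intro Min_in) auto
  then have "0 < m"
    using C_pos by (auto intro: less_le_trans)
  have "card (setBe k C e) * m ^ r = (\<Prod>s<k. (if e s = 1 then C s else C s * C s) * m ^ e s)"
    unfolding card_setBe r[symmetric] power_sum prod.distrib ..
  also have "\<dots> \<le> (\<Prod>s<k. C s * C s)"
    using e m_le by (intro prod_mono) auto
  also have "\<dots> = (\<Prod>s<k. C s)\<^sup>2"
    by (simp add: power2_eq_square prod.distrib)
  finally have "real (card (setBe k C e)) * real m ^ r \<le> (real (\<Prod>s<k. C s))\<^sup>2"
    by (metis of_nat_le_iff of_nat_mult of_nat_power)
  moreover have "0 < (\<Prod>s<k. C s)"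
    using C_pos by (intro prod_pos) (auto intro: less_le_trans)
  ultimately show ?thesis
    using \<open>0 < m\<close> by (simp add: m_def powr_minus powr_realpow field_simps)
qed

locale dominated_products =
  fixes M :: "'a measure" and P :: "'p set" and I :: "'i set"
    and x :: "'i \<Rightarrow> 'a \<Rightarrow> 'p \<Rightarrow> real" and w :: "'p \<Rightarrow> 'a \<Rightarrow> real" and d :: real
  assumes w_measurable: "\<And>p. p \<in> P \<Longrightarrow> w p \<in> borel_measurable M"
    and w_nonneg: "\<And>p \<omega>. p \<in> P \<Longrightarrow> 0 \<le> w p \<omega>"
    and nn_integral_w: "\<And>p. p \<in> P \<Longrightarrow> (\<integral>\<^sup>+\<omega>. w p \<omega> \<partial>M) = ennreal d"
    and d_nonneg: "0 \<le> d"
    and abs_x_le_w: "\<And>i \<omega> p. i \<in> I \<Longrightarrow> \<omega> \<in> space M \<Longrightarrow> p \<in> P \<Longrightarrow> \<bar>x i \<omega> p\<bar> \<le> w p \<omega>"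
begin

text \<open>No measurability of the supremum over \<open>I\<close> is needed: \<open>nn_integral\<close> is the supremum of
  the integrals of simple functions below the integrand, so it is monotone for arbitrary
  integrands.\<close>

lemma nn_integral_SUP_le_weighted_sum:
  assumes Q: "finite Q" "Q \<subseteq> P" and c: "\<And>p. p \<in> Q \<Longrightarrow> 0 \<le> c p"
    and X: "\<And>i \<omega>. i \<in> I \<Longrightarrow> \<omega> \<in> space M \<Longrightarrow> \<bar>X i \<omega>\<bar> \<le> (\<Sum>p\<in>Q. c p * w p \<omega>)"
  shows "(\<integral>\<^sup>+\<omega>. (SUP i\<in>I. ennreal \<bar>X i \<omega>\<bar>) \<partial>M) \<le> ennreal (d * (\<Sum>p\<in>Q. c p))"
proof -
  have w_Q: "p \<in> Q \<Longrightarrow> p \<in> P" for p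
    using Q by auto
  have "(\<integral>\<^sup>+\<omega>. (SUP i\<in>I. ennreal \<bar>X i \<omega>\<bar>) \<partial>M) \<le> (\<integral>\<^sup>+\<omega>. ennreal (\<Sum>p\<in>Q. c p * w p \<omega>) \<partial>M)"
    by (intro nn_integral_mono SUP_least ennreal_leI X)
  also have "\<dots> = (\<integral>\<^sup>+\<omega>. (\<Sum>p\<in>Q. ennreal (c p) * ennreal (w p \<omega>)) \<partial>M)"
    using c w_nonneg[OF w_Q]
    by (intro nn_integral_cong) (simp add: sum_ennreal[symmetric] ennreal_mult)
  also have "\<dots> = (\<Sum>p\<in>Q. ennreal (c p) * (\<integral>\<^sup>+\<omega>. w p \<omega> \<partial>M))"
    using w_measurable[OF w_Q] by (simp add: nn_integral_sum nn_integral_cmult)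
  also have "\<dots> = ennreal (d * (\<Sum>p\<in>Q. c p))"
    using c d_nonneg
    by (simp add: nn_integral_w[OF w_Q] ennreal_mult[symmetric] sum_ennreal sum_distrib_left
        mult.commute)
  finally show ?thesis .
qed

lemma tendsto_nn_integral_SUP_abs_avg_diff:
  assumes B: "\<And>n. finite (B n)" "\<And>n. B n \<subseteq> P" and AB: "\<And>n. A n \<subseteq> B n"
    and ratio: "((\<lambda>n. real (card (A n)) / real (card (B n))) \<longlongrightarrow> 1) sequentially"
  shows "((\<lambda>n. \<integral>\<^sup>+\<omega>. (SUP i\<in>I. ennreal \<bar>(\<Sum>p\<in>B n. x i \<omega> p) / real (card (B n))
                                   - (\<Sum>p\<in>A n. x i \<omega> p) / real (card (A n))\<bar>) \<partial>M)
          \<longlongrightarrow> 0) sequentially"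
proof (rule tendsto_sandwich[OF _ _ tendsto_const])
  have "eventually (\<lambda>n. 0 < real (card (A n)) / real (card (B n))) sequentially"
    using ratio by (rule order_tendstoD) simp
  then show "eventually (\<lambda>n. \<integral>\<^sup>+\<omega>. (SUP i\<in>I. ennreal \<bar>(\<Sum>p\<in>B n. x i \<omega> p) / real (card (B n))
        - (\<Sum>p\<in>A n. x i \<omega> p) / real (card (A n))\<bar>) \<partial>M
      \<le> ennreal (d * (2 - 2 * (real (card (A n)) / real (card (B n)))))) sequentially"
  proof eventually_elim
    case (elim n)
    then have "A n \<noteq> {}"
      by auto
    have "(\<integral>\<^sup>+\<omega>. (SUP i\<in>I. ennreal \<bar>(\<Sum>p\<in>B n. x i \<omega> p) / real (card (B n))
        - (\<Sum>p\<in>A n. x i \<omega> p) / real (card (A n))\<bar>) \<partial>M)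
      \<le> ennreal (d * (\<Sum>p\<in>B n. avg_diff_weight (A n) (B n) p))"
      using B AB \<open>A n \<noteq> {}\<close>
      by (intro nn_integral_SUP_le_weighted_sum avg_diff_weight_nonneg abs_avg_diff_le abs_x_le_w)
         auto
    then show ?case
      using B AB \<open>A n \<noteq> {}\<close> by (simp add: sum_avg_diff_weight)
  qed
  have "((\<lambda>n. ennreal (d * (2 - 2 * (real (card (A n)) / real (card (B n))))))
          \<longlongrightarrow> ennreal (d * (2 - 2 * 1))) sequentially"
    by (intro tendsto_ennrealI tendsto_intros ratio)
  then show "((\<lambda>n. ennreal (d * (2 - 2 * (real (card (A n)) / real (card (B n)))))) \<longlongrightarrow> 0)
      sequentially"
    by simp
qed simp

lemma nn_integral_SUP_abs_sum_le:
  assumes Q: "finite Q" "Q \<subseteq> P" and "0 \<le> c" and card_Q: "real (card Q) / c \<le> b"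
  shows "ennreal (1 / c) * (\<integral>\<^sup>+\<omega>. (SUP i\<in>I. ennreal \<bar>\<Sum>p\<in>Q. x i \<omega> p\<bar>) \<partial>M) \<le> ennreal (d * b)"
proof -
  have "(\<integral>\<^sup>+\<omega>. (SUP i\<in>I. ennreal \<bar>\<Sum>p\<in>Q. x i \<omega> p\<bar>) \<partial>M) \<le> ennreal (d * (\<Sum>p\<in>Q. 1))"
  proof (rule nn_integral_SUP_le_weighted_sum[OF Q])
    show "\<bar>\<Sum>p\<in>Q. x i \<omega> p\<bar> \<le> (\<Sum>p\<in>Q. 1 * w p \<omega>)" if "i \<in> I" "\<omega> \<in> space M" for i \<omega>
      using that Q by (intro order_trans[OF sum_abs] sum_mono) (auto intro: abs_x_le_w)
  qed simp
  then have "ennreal (1 / c) * (\<integral>\<^sup>+\<omega>. (SUP i\<in>I. ennreal \<bar>\<Sum>p\<in>Q. x i \<omega> p\<bar>) \<partial>M)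
      \<le> ennreal (1 / c) * ennreal (d * real (card Q))"
    by (simp add: mult_left_mono)
  also have "\<dots> = ennreal (d * (real (card Q) / c))"
    using \<open>0 \<le> c\<close> d_nonneg by (simp add: ennreal_mult[symmetric] ac_simps)
  also have "\<dots> \<le> ennreal (d * b)"
    using card_Q d_nonneg by (intro ennreal_leI mult_left_mono)
  finally show ?thesis .
qed

end

lemma measurable_cell_data:
  assumes "(\<lambda>\<omega>. N \<omega> j) \<in> measurable M (count_space UNIV)"
    and "\<And>l. (\<lambda>\<omega>. Y \<omega> l j) \<in> borel_measurable M"
  shows "(\<lambda>\<omega>. (N \<omega> j, \<lambda>l. Y \<omega> l j)) \<in> measurable M cell_space"
  unfolding cell_space_def
proof (rule measurable_Pair)
  have "(\<lambda>\<omega>. \<lambda>l\<in>UNIV. Y \<omega> l j) \<in> measurable M (\<Pi>\<^sub>M l\<in>UNIV. borel)"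
    by (rule measurable_restrict) (use assms in auto)
  then show "(\<lambda>\<omega> l. Y \<omega> l j) \<in> measurable M (\<Pi>\<^sub>M l\<in>UNIV. borel)"
    by (simp add: restrict_def)
qed (fact assms)

lemma measurable_cell_sum_square:
  assumes "h \<in> borel_measurable borel"
  shows "(\<lambda>x. ennreal ((\<Sum>l=1..fst x. h (snd x l))\<^sup>2)) \<in> borel_measurable cell_space"
proof (rule measurable_compose_countable[of "\<lambda>n x. ennreal ((\<Sum>l=1..n. h (snd x l))\<^sup>2)" _ _ fst])
  show "fst \<in> measurable cell_space (count_space UNIV)"
    unfolding cell_space_def by (rule measurable_fst)
  show "(\<lambda>x. ennreal ((\<Sum>l=1..n. h (snd x l))\<^sup>2)) \<in> borel_measurable cell_space" for n
    unfolding cell_space_def using assms by measurable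
qed

lemma permute_cell_in_cells:
  assumes "\<forall>i<k. \<pi> i permutes {1..}" and "c \<in> cells k"
  shows "permute_cell k \<pi> c \<in> cells k"
  using assms permutes_in_image[of "\<pi> _" "{1..}"]
  unfolding permute_cell_def cells_def by auto

text \<open>Exchangeability moves any cell to \<open>one_cell k\<close> by the coordinatewise transpositions
  \<open>1 \<leftrightarrow> j i\<close>.\<close>

lemma A1_nn_integral_cell_eq:
  assumes A1: "A1 M k N Y" and j: "j \<in> cells k"
    and N_meas: "\<And>j. j \<in> cells k \<Longrightarrow> (\<lambda>\<omega>. N \<omega> j) \<in> measurable M (count_space UNIV)"
    and Y_meas: "\<And>l j. j \<in> cells k \<Longrightarrow> (\<lambda>\<omega>. Y \<omega> l j) \<in> borel_measurable M"
    and h: "h \<in> borel_measurable cell_space"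
  shows "(\<integral>\<^sup>+\<omega>. h (N \<omega> j, \<lambda>l. Y \<omega> l j) \<partial>M)
       = (\<integral>\<^sup>+\<omega>. h (N \<omega> (one_cell k), \<lambda>l. Y \<omega> l (one_cell k)) \<partial>M)"
proof -
  define \<pi> where "\<pi> = (\<lambda>i. Transposition.transpose (1::nat) (j i))"
  have perm: "\<forall>i<k. \<pi> i permutes {1..}"
    using j unfolding \<pi>_def cells_def by (auto intro!: permutes_swap_id)
  have one: "one_cell k \<in> cells k"
    unfolding one_cell_def cells_def by auto
  have moves_one: "permute_cell k \<pi> (one_cell k) = j"
    using j unfolding permute_cell_def \<pi>_def one_cell_def cells_def by auto
  let ?S = "array_space k (cells k)"
  define D where "D = data_array N Y (cells k)"
  define D' where "D' = (\<lambda>\<omega>. \<lambda>j\<in>cells k. D \<omega> (permute_cell k \<pi> j))"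
  have same_law: "distr M ?S D = distr M ?S D'"
    using A1 perm unfolding A1_def D_def D'_def by blast
  have D_meas: "D \<in> measurable M ?S"
    unfolding D_def data_array_def array_space_def
    by (intro measurable_restrict measurable_cell_data N_meas Y_meas)
  have D'_meas: "D' \<in> measurable M ?S"
    unfolding D'_def D_def data_array_def array_space_def
    using permute_cell_in_cells[OF perm]
    by (intro measurable_restrict) (auto intro!: measurable_cell_data N_meas Y_meas)
  define \<phi> where "\<phi> = (\<lambda>x::(nat \<Rightarrow> nat) \<Rightarrow> _. h (x (one_cell k)))"
  have \<phi>_meas: "\<phi> \<in> borel_measurable ?S"
    unfolding \<phi>_def array_space_def
    by (rule measurable_compose[OF measurable_component_singleton[OF one] h])
  have "(\<integral>\<^sup>+\<omega>. \<phi> (D \<omega>) \<partial>M) = (\<integral>\<^sup>+x. \<phi> x \<partial>distr M ?S D)"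
    using D_meas \<phi>_meas by (simp add: nn_integral_distr)
  also have "\<dots> = (\<integral>\<^sup>+x. \<phi> x \<partial>distr M ?S D')"
    by (simp add: same_law)
  also have "\<dots> = (\<integral>\<^sup>+\<omega>. \<phi> (D' \<omega>) \<partial>M)"
    using D'_meas \<phi>_meas by (simp add: nn_integral_distr)
  finally show ?thesis
    unfolding \<phi>_def D'_def D_def data_array_def using one moves_one j by simp
qed

definition cell_weight :: "('a \<Rightarrow> (nat \<Rightarrow> nat) \<Rightarrow> nat) \<Rightarrow> ('a \<Rightarrow> nat \<Rightarrow> (nat \<Rightarrow> nat) \<Rightarrow> 'b)
    \<Rightarrow> ('b \<Rightarrow> real) \<Rightarrow> ('b \<Rightarrow> real) \<Rightarrow> (nat \<Rightarrow> nat) \<times> (nat \<Rightarrow> nat) \<Rightarrow> 'a \<Rightarrow> real" where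
  "cell_weight N Y F G p \<omega> = ((Ssum N Y F \<omega> (fst p))\<^sup>2 + (Ssum N Y G \<omega> (snd p))\<^sup>2) / 2"

lemma abs_Ssum_le:
  assumes "\<And>l. \<bar>f (Y \<omega> l j)\<bar> \<le> F (Y \<omega> l j)"
  shows "\<bar>Ssum N Y f \<omega> j\<bar> \<le> Ssum N Y F \<omega> j"
  unfolding Ssum_def using assms by (intro order_trans[OF sum_abs sum_mono])

lemma abs_Ssum_mult_le_cell_weight:
  assumes "\<And>l. \<bar>f (Y \<omega> l j)\<bar> \<le> F (Y \<omega> l j)" and "\<And>l. \<bar>g (Y \<omega> l j')\<bar> \<le> G (Y \<omega> l j')"
  shows "\<bar>Ssum N Y f \<omega> j * Ssum N Y g \<omega> j'\<bar> \<le> cell_weight N Y F G (j, j') \<omega>"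
proof -
  define a where "a = Ssum N Y F \<omega> j"
  define b where "b = Ssum N Y G \<omega> j'"
  have "\<bar>Ssum N Y f \<omega> j * Ssum N Y g \<omega> j'\<bar> \<le> a * b"
    unfolding abs_mult a_def b_def using assms
    by (intro mult_mono abs_Ssum_le) (auto intro: order_trans[OF abs_ge_zero abs_Ssum_le])
  also have "\<dots> \<le> (a\<^sup>2 + b\<^sup>2) / 2"
    using sum_squares_bound[of a b] by simp
  finally show ?thesis
    unfolding cell_weight_def a_def b_def by simp
qed

lemma borel_measurable_Ssum:
  assumes "(\<lambda>\<omega>. N \<omega> j) \<in> measurable M (count_space UNIV)"
    and "\<And>l. (\<lambda>\<omega>. Y \<omega> l j) \<in> borel_measurable M" and "h \<in> borel_measurable borel"
  shows "(\<lambda>\<omega>. Ssum N Y h \<omega> j) \<in> borel_measurable M"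
  unfolding Ssum_def
proof (rule measurable_compose_countable[of "\<lambda>n \<omega>. \<Sum>l=1..n. h (Y \<omega> l j)" _ _ "\<lambda>\<omega>. N \<omega> j"])
  show "(\<lambda>\<omega>. \<Sum>l = 1..n. h (Y \<omega> l j)) \<in> borel_measurable M" for n
    using assms by (intro borel_measurable_sum measurable_compose[OF _ assms(3)]) auto
qed (fact assms)

lemma nn_integral_cell_weight:
  assumes A1: "A1 M k N Y" and p: "p \<in> cells k \<times> cells k"
    and N_meas: "\<And>j. j \<in> cells k \<Longrightarrow> (\<lambda>\<omega>. N \<omega> j) \<in> measurable M (count_space UNIV)"
    and Y_meas: "\<And>l j. j \<in> cells k \<Longrightarrow> (\<lambda>\<omega>. Y \<omega> l j) \<in> borel_measurable M"
    and F: "F \<in> borel_measurable borel" and G: "G \<in> borel_measurable borel"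
  shows "(\<integral>\<^sup>+\<omega>. cell_weight N Y F G p \<omega> \<partial>M)
       = ((\<integral>\<^sup>+\<omega>. (Ssum N Y F \<omega> (one_cell k))\<^sup>2 \<partial>M)
          + (\<integral>\<^sup>+\<omega>. (Ssum N Y G \<omega> (one_cell k))\<^sup>2 \<partial>M)) / 2"
proof -
  have square_eq: "(\<integral>\<^sup>+\<omega>. (Ssum N Y h \<omega> j)\<^sup>2 \<partial>M) = (\<integral>\<^sup>+\<omega>. (Ssum N Y h \<omega> (one_cell k))\<^sup>2 \<partial>M)"
    if "h \<in> borel_measurable borel" "j \<in> cells k" for h j
    using A1_nn_integral_cell_eq[OF A1 \<open>j \<in> cells k\<close> N_meas Y_meas
        measurable_cell_sum_square[OF \<open>h \<in> borel_measurable borel\<close>]]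
    by (simp add: Ssum_def)
  have square_meas: "(\<lambda>\<omega>. (Ssum N Y h \<omega> j)\<^sup>2) \<in> borel_measurable M"
    if "h \<in> borel_measurable borel" "j \<in> cells k" for h j
    using that by (intro borel_measurable_power borel_measurable_Ssum N_meas Y_meas)
  have "(\<integral>\<^sup>+\<omega>. cell_weight N Y F G p \<omega> \<partial>M)
      = (\<integral>\<^sup>+\<omega>. (ennreal ((Ssum N Y F \<omega> (fst p))\<^sup>2)
                + ennreal ((Ssum N Y G \<omega> (snd p))\<^sup>2)) / 2 \<partial>M)"
    by (intro nn_integral_cong)
       (simp add: cell_weight_def ennreal_divide_numeral[symmetric] ennreal_plus)
  also have "\<dots> = ((\<integral>\<^sup>+\<omega>. (Ssum N Y F \<omega> (fst p))\<^sup>2 \<partial>M)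
                    + (\<integral>\<^sup>+\<omega>. (Ssum N Y G \<omega> (snd p))\<^sup>2 \<partial>M)) / 2"
  proof -
    have "(\<lambda>\<omega>. ennreal ((Ssum N Y F \<omega> (fst p))\<^sup>2)) \<in> borel_measurable M"
      and "(\<lambda>\<omega>. ennreal ((Ssum N Y G \<omega> (snd p))\<^sup>2)) \<in> borel_measurable M"
      using p F G by (auto intro: square_meas)
    then show ?thesis
      by (simp add: nn_integral_divide nn_integral_add)
  qed
  finally show ?thesis
    using p F G by (simp add: square_eq mem_Times_iff)
qed

theorem lemma11:
  fixes M :: "'a measure" and k :: nat
    and N :: "'a \<Rightarrow> (nat \<Rightarrow> nat) \<Rightarrow> nat"
    and Y :: "'a \<Rightarrow> nat \<Rightarrow> (nat \<Rightarrow> nat) \<Rightarrow> real ^ 'l"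
    and Ys :: "(real ^ 'l) set"
    and \<F> \<G> :: "(real ^ 'l \<Rightarrow> real) set"
    and Fe Ge :: "real ^ 'l \<Rightarrow> real"
    and C :: "nat \<Rightarrow> nat \<Rightarrow> nat"
    and lam :: "nat \<Rightarrow> real"
  assumes M: "prob_space M"
    and k: "k \<ge> 1"
    and N_meas: "\<And>j. j \<in> cells k \<Longrightarrow> (\<lambda>\<omega>. N \<omega> j) \<in> measurable M (count_space UNIV)"
    and Y_meas: "\<And>l j. j \<in> cells k \<Longrightarrow> (\<lambda>\<omega>. Y \<omega> l j) \<in> borel_measurable M"
    and Y_in: "\<And>\<omega> l j. \<omega> \<in> space M \<Longrightarrow> j \<in> cells k \<Longrightarrow> Y \<omega> l j \<in> Ys"
    and A1: "A1 M k N Y"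
    and F_pm: "pointwise_measurable Ys \<F>" and G_pm: "pointwise_measurable Ys \<G>"
    and F_meas: "\<And>f. f \<in> \<F> \<Longrightarrow> f \<in> borel_measurable borel"
    and G_meas: "\<And>g. g \<in> \<G> \<Longrightarrow> g \<in> borel_measurable borel"
    and Fe_meas: "Fe \<in> borel_measurable borel" and Ge_meas: "Ge \<in> borel_measurable borel"
    and F_env: "\<And>f y. f \<in> \<F> \<Longrightarrow> y \<in> Ys \<Longrightarrow> \<bar>f y\<bar> \<le> Fe y"
    and G_env: "\<And>g y. g \<in> \<G> \<Longrightarrow> y \<in> Ys \<Longrightarrow> \<bar>g y\<bar> \<le> Ge y"
    and F_mom: "(\<integral>\<^sup>+\<omega>. ennreal ((Ssum N Y Fe \<omega> (one_cell k))\<^sup>2) \<partial>M) < \<infinity>"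
    and G_mom: "(\<integral>\<^sup>+\<omega>. ennreal ((Ssum N Y Ge \<omega> (one_cell k))\<^sup>2) \<partial>M) < \<infinity>"
    and C_pos: "\<And>n i. i < k \<Longrightarrow> C n i \<ge> 1"
    and C_lim: "filterlim (\<lambda>n. Min ((C n) ` {..<k})) at_top sequentially"
    and C_ratio: "\<And>i. i < k \<Longrightarrow> lam i \<ge> 0 \<and>
                    (\<lambda>n. real (Min ((C n) ` {..<k})) / real (C n i)) \<longlonglongrightarrow> lam i"
  shows
    "(\<forall>i<k.
       ((\<lambda>n. \<integral>\<^sup>+\<omega>. (SUP fg\<in>\<F> \<times> \<G>. ennreal \<bar>
            (\<Sum>(j, j')\<in>setB k (C n) i. Ssum N Y (fst fg) \<omega> j * Ssum N Y (snd fg) \<omega> j')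
               / real (card (setB k (C n) i))
          - (\<Sum>(j, j')\<in>setA k (C n) i. Ssum N Y (fst fg) \<omega> j * Ssum N Y (snd fg) \<omega> j')
               / real (card (setA k (C n) i))\<bar>) \<partial>M)
        \<longlongrightarrow> 0) sequentially)
     \<and>
     (\<forall>r e. r \<ge> 1 \<longrightarrow> (\<forall>i<k. e i \<in> {0, 1}) \<longrightarrow> (\<Sum>i<k. e i) = r \<longrightarrow>
       (\<exists>K::real. eventually (\<lambda>n.
          ennreal (1 / (real (\<Prod>i<k. C n i))\<^sup>2) *
          (\<integral>\<^sup>+\<omega>. (SUP fg\<in>\<F> \<times> \<G>. ennreal \<bar>
            \<Sum>(j, j')\<in>setBe k (C n) e. Ssum N Y (fst fg) \<omega> j * Ssum N Y (snd fg) \<omega> j'\<bar>) \<partial>M)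
          \<le> ennreal (K * real (Min ((C n) ` {..<k})) powr (- real r))) sequentially))"
proof -
  let ?one = "one_cell k"
  define d where "d = enn2real (((\<integral>\<^sup>+\<omega>. (Ssum N Y Fe \<omega> ?one)\<^sup>2 \<partial>M)
                                + (\<integral>\<^sup>+\<omega>. (Ssum N Y Ge \<omega> ?one)\<^sup>2 \<partial>M)) / 2)"
  interpret dominated_products M "cells k \<times> cells k" "\<F> \<times> \<G>"
      "\<lambda>fg \<omega> (j, j'). Ssum N Y (fst fg) \<omega> j * Ssum N Y (snd fg) \<omega> j'" "cell_weight N Y Fe Ge" d
  proof
    show "cell_weight N Y Fe Ge p \<in> borel_measurable M" if "p \<in> cells k \<times> cells k" for p
      using that unfolding cell_weight_def mem_Times_iff
      by (intro borel_measurable_divide borel_measurable_add borel_measurable_power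
          borel_measurable_Ssum N_meas Y_meas Fe_meas Ge_meas measurable_const) auto
    show "(\<integral>\<^sup>+\<omega>. cell_weight N Y Fe Ge p \<omega> \<partial>M) = ennreal d" if "p \<in> cells k \<times> cells k" for p
      using nn_integral_cell_weight[OF A1 that N_meas Y_meas Fe_meas Ge_meas] F_mom G_mom
      by (simp add: d_def ennreal_enn2real_if ennreal_divide_eq_top_iff less_top)
    show "\<bar>(case p of (j, j') \<Rightarrow> Ssum N Y (fst fg) \<omega> j * Ssum N Y (snd fg) \<omega> j')\<bar>
        \<le> cell_weight N Y Fe Ge p \<omega>"
      if "fg \<in> \<F> \<times> \<G>" "\<omega> \<in> space M" "p \<in> cells k \<times> cells k" for fg \<omega> p
      using that by (auto intro!: abs_Ssum_mult_le_cell_weight F_env G_env Y_in)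
  qed (auto simp: cell_weight_def d_def)
  show ?thesis
    using k C_pos
    by (intro conjI allI impI exI[of _ d] always_eventually
        tendsto_nn_integral_SUP_abs_avg_diff[OF finite_setB setB_subset_cells setA_subset_setB]
        card_setA_div_card_setB_tendsto_1[OF C_lim C_pos]
        nn_integral_SUP_abs_sum_le[OF finite_setBe setBe_subset_cells] card_setBe_div_square_le)
       auto
qed

end
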